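(* Let $X$ be any real random variable, $\mathsf{snr}>0$, $N\sim\mathcal N(0,1)$ independent of $X$, $Y=\sqrt{\mathsf{snr}}X+N$, and $M_i=\mathbb{E}\big[(X-\mathbb{E}[X\mid Y])^i\mid Y\big]$ for $i=1,2,\dots$. Then for any $k\ge1$ and positive integers $i_1,\dots,i_k,n_1,\dots,n_k$, $$\mathbb{E}\Big[\prod_{j=1}^k|M_{i_j}|^{n_j}\Big]\le\mathsf{snr}^{-n/2}\,2^n\sqrt{n!},\qquad n=\sum_{j=1}^k i_jn_j.$$ *)

theory Defs
  imports "HOL-Probability.Probability"
begin

definition gen_sigma :: "'a measure \<Rightarrow> ('a \<Rightarrow> real) \<Rightarrow> 'a measure" where
  "gen_sigma M Y = vimage_algebra (space M) Y borel"

definition cond_moment :: "'a measure \<Rightarrow> ('a \<Rightarrow> real) \<Rightarrow> ('a \<Rightarrow> real) \<Rightarrow> nat \<Rightarrow> 'a \<Rightarrow> real" where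
  "cond_moment M X Y i =
     real_cond_exp M (gen_sigma M Y)
       (\<lambda>\<omega>. (X \<omega> - real_cond_exp M (gen_sigma M Y) X \<omega>) ^ i)"

end

theory Submission
  imports Defs
begin

(* Write c = 1 / sqrt snr and F for the sigma-algebra generated by Y.  Since
   X = c * Y - c * N and c * Y is F-measurable, the conditional error is that of the noise:
   X - E[X|F] = W - E[W|F] with W = -c * N.  Hence every conditional central moment M_i of X
   coincides almost surely with E[V^i | F] for the innovation V = W - E[W|F].
   With s = sum_j i_j n_j, conditional Jensen for the convex map |x| powr (s / i_j) gives
   |E[V^i_j | F]| powr (s / i_j) <= E[|V|^s | F]; since the weights i_j n_j / s sum to one,
   the product prod_j |M_i_j|^n_j is bounded pointwise by E[|V|^s | F], whose expectation is
   E|V|^s.  Finally E|V|^s <= 2^s E|W|^s (convexity and Jensen once more), and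
   E|W|^s = c^s E|N|^s <= c^s sqrt(s!) by the explicit Gaussian absolute moments. *)

lemma fact_double_eq: "(fact (2 * k) :: real) = real (2 * k choose k) * (fact k)\<^sup>2"
  using binomial_fact[of k "2 * k", where 'a = real] by (simp add: power2_eq_square field_simps)

lemma fact_double_le: "fact (2 * k) \<le> (4::real) ^ k * (fact k)\<^sup>2"
proof -
  have "real (2 * k choose k) \<le> 2 ^ (2 * k)"
    using binomial_le_pow2 by (metis of_nat_le_iff of_nat_numeral of_nat_power)
  then show ?thesis
    unfolding fact_double_eq by (intro mult_right_mono) (simp_all add: power_mult)
qed

lemma fact_double_Suc_ge: "(4::real) ^ k * (fact k)\<^sup>2 \<le> fact (2 * k + 1)"
proof -
  have "4 ^ k \<le> (2 * real k + 1) * real (2 * k choose k)"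
  proof (cases "k = 0")
    case False
    then have "4 ^ k \<le> 2 * real k * real (2 * k choose k)"
      using central_binomial_lower_bound[of k] by (simp add: field_simps)
    then show ?thesis by (simp add: algebra_simps)
  qed simp
  then have "4 ^ k * (fact k)\<^sup>2 \<le> (2 * real k + 1) * real (2 * k choose k) * (fact k)\<^sup>2"
    by (intro mult_right_mono) simp_all
  also have "\<dots> = (2 * real k + 1) * fact (2 * k)"
    unfolding fact_double_eq by simp
  also have "\<dots> = fact (2 * k + 1)"
    by simp
  finally show ?thesis .
qed

text \<open>The even moments are explicit double factorials, the odd
  absolute moments are explicit as well; both are compared with the factorial via the two
  previous bounds.\<close>

lemma std_normal_abs_moment_le:
  "(\<integral>x. std_normal_density x * \<bar>x\<bar> ^ n \<partial>lborel) \<le> sqrt (fact n)"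
proof (cases "even n")
  case True
  then obtain k where n: "n = 2 * k" by (auto elim: evenE)
  have "(\<integral>x. std_normal_density x * \<bar>x\<bar> ^ n \<partial>lborel) = fact (2 * k) / (2 ^ k * fact k)"
    using integral_std_normal_moment_even[of k] by (simp add: n power_mult power2_abs)
  also have "\<dots> \<le> sqrt (fact (2 * k))"
  proof (rule real_le_rsqrt)
    have "(fact (2 * k) / (2 ^ k * fact k))\<^sup>2 = fact (2 * k) * (fact (2 * k) / (4 ^ k * (fact k)\<^sup>2) :: real)"
      by (simp add: power2_eq_square power_mult_distrib[symmetric] field_simps)
    also have "\<dots> \<le> fact (2 * k)"
      using fact_double_le[of k] by (intro mult_right_le_one_le) simp_all
    finally show "(fact (2 * k) / (2 ^ k * fact k) :: real)\<^sup>2 \<le> fact (2 * k)" .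
  qed
  finally show ?thesis by (simp add: n)
next
  case False
  then obtain k where n: "n = 2 * k + 1" by (metis oddE)
  have "(\<integral>x. std_normal_density x * \<bar>x\<bar> ^ n \<partial>lborel) = sqrt (2 / pi) * 2 ^ k * fact k"
    using integral_std_normal_moment_abs_odd[of k] by (simp add: n)
  also have "\<dots> \<le> sqrt (fact (2 * k + 1))"
  proof (rule real_le_rsqrt)
    have "(sqrt (2 / pi) * 2 ^ k * fact k)\<^sup>2 = (2 / pi) * (4 ^ k * (fact k)\<^sup>2)"
      by (simp add: power2_eq_square power_mult_distrib[symmetric] field_simps)
    also have "\<dots> \<le> 4 ^ k * (fact k)\<^sup>2"
      using pi_gt3 by (intro mult_left_le_one_le) simp_all
    also have "\<dots> \<le> fact (2 * k + 1)" by (rule fact_double_Suc_ge)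
    finally show "(sqrt (2 / pi) * 2 ^ k * fact k)\<^sup>2 \<le> fact (2 * k + 1)" .
  qed
  finally show ?thesis by (simp add: n)
qed

lemma scaled_std_normal_abs_moment:
  fixes c :: real
  assumes N: "distributed M lborel N std_normal_density"
  shows "integrable M (\<lambda>x. \<bar>c * N x\<bar> ^ p)"
    and "(\<integral>x. \<bar>c * N x\<bar> ^ p \<partial>M) \<le> \<bar>c\<bar> ^ p * sqrt (fact p)"
proof -
  have scale: "(\<lambda>x. \<bar>c * N x\<bar> ^ p) = (\<lambda>x. \<bar>c\<bar> ^ p * \<bar>N x\<bar> ^ p)"
    by (simp add: abs_mult power_mult_distrib)
  have N_p: "integrable M (\<lambda>x. \<bar>N x\<bar> ^ p)"
    using distributed_integrable[OF N, of "\<lambda>x. \<bar>x\<bar> ^ p"] integrable_std_normal_moment_abs[of p] by simp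
  have "(\<integral>x. \<bar>N x\<bar> ^ p \<partial>M) \<le> sqrt (fact p)"
    using distributed_integral[OF N, of "\<lambda>x. \<bar>x\<bar> ^ p"] std_normal_abs_moment_le[of p] by simp
  then show "(\<integral>x. \<bar>c * N x\<bar> ^ p \<partial>M) \<le> \<bar>c\<bar> ^ p * sqrt (fact p)"
    unfolding scale by (simp add: mult_left_mono)
  show "integrable M (\<lambda>x. \<bar>c * N x\<bar> ^ p)"
    unfolding scale using N_p by simp
qed

text \<open>Power functions with exponent at least one are convex on the closed half-line (the
  library covers the open one).\<close>

lemma powr_convex_nonneg:
  fixes p :: real
  assumes "p \<ge> 1"
  shows "convex_on {0..} (\<lambda>x. x powr p)"
proof (rule convex_onI)
  fix t x y :: real
  assume t: "0 < t" "t < 1" and xy: "x \<in> {0..}" "y \<in> {0..}"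
  have shrink: "u powr p \<le> u" if "0 < u" "u < 1" for u :: real
    using powr_mono'[of 1 p u] that assms by simp
  consider "x = 0" | "y = 0" | "x > 0" "y > 0" using xy by fastforce
  then show "((1 - t) *\<^sub>R x + t *\<^sub>R y) powr p \<le> (1 - t) * x powr p + t * y powr p"
  proof cases
    case 1
    have "(t * y) powr p = t powr p * y powr p" using t xy by (simp add: powr_mult)
    also have "\<dots> \<le> t * y powr p" using shrink[of t] t by (intro mult_right_mono) simp_all
    finally show ?thesis using 1 by simp
  next
    case 2
    have "((1 - t) * x) powr p = (1 - t) powr p * x powr p" using t xy by (simp add: powr_mult)
    also have "\<dots> \<le> (1 - t) * x powr p" using shrink[of "1 - t"] t by (intro mult_right_mono) simp_all
    finally show ?thesis using 2 by simp
  next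
    case 3
    then show ?thesis
      using powr_convex[OF assms] t by (simp add: convex_on_def)
  qed
qed simp

lemma abs_powr_convex:
  fixes p :: real
  assumes "p \<ge> 1"
  shows "convex_on UNIV (\<lambda>x. \<bar>x\<bar> powr p)"
proof (rule convex_onI)
  fix t x y :: real
  assume t: "0 < t" "t < 1"
  have "\<bar>(1 - t) *\<^sub>R x + t *\<^sub>R y\<bar> powr p \<le> ((1 - t) * \<bar>x\<bar> + t * \<bar>y\<bar>) powr p"
    using t assms
    by (intro powr_mono2) (auto simp: abs_mult intro: order_trans[OF abs_triangle_ineq])
  also have "\<dots> \<le> (1 - t) * \<bar>x\<bar> powr p + t * \<bar>y\<bar> powr p"
    using convex_onD[OF powr_convex_nonneg[OF assms], of t "\<bar>x\<bar>" "\<bar>y\<bar>"] t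
    by (simp add: mult.commute)
  finally show "\<bar>(1 - t) *\<^sub>R x + t *\<^sub>R y\<bar> powr p \<le> (1 - t) * \<bar>x\<bar> powr p + t * \<bar>y\<bar> powr p" .
qed simp

lemma abs_diff_power_le:
  fixes a b :: real
  assumes "n > 0"
  shows "\<bar>a - b\<bar> ^ n \<le> 2 ^ (n - 1) * (\<bar>a\<bar> ^ n + \<bar>b\<bar> ^ n)"
proof -
  have "\<bar>(1/2) * a + (1/2) * (- b)\<bar> powr n \<le> (1/2) * \<bar>a\<bar> powr n + (1/2) * \<bar>- b\<bar> powr n"
    using convex_onD[OF abs_powr_convex, of n "1/2" a "- b"] assms by simp
  then have "(\<bar>a - b\<bar> / 2) ^ n \<le> (\<bar>a\<bar> ^ n + \<bar>b\<bar> ^ n) / 2"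
    using assms by (simp add: powr_realpow' diff_divide_distrib[symmetric] add_divide_distrib)
  then have "\<bar>a - b\<bar> ^ n \<le> 2 ^ n * (\<bar>a\<bar> ^ n + \<bar>b\<bar> ^ n) / 2"
    by (simp add: field_simps)
  also have "\<dots> = 2 ^ (n - 1) * (\<bar>a\<bar> ^ n + \<bar>b\<bar> ^ n)"
    using assms by (cases n) simp_all
  finally show ?thesis .
qed

lemma abs_power_powr:
  fixes x :: real
  assumes "i > 0" "n > 0"
  shows "\<bar>x ^ i\<bar> powr (real n / real i) = \<bar>x\<bar> ^ n"
proof (cases "x = 0")
  case False
  then have "\<bar>x ^ i\<bar> = \<bar>x\<bar> powr real i"
    by (simp add: power_abs powr_realpow)
  then have "\<bar>x ^ i\<bar> powr (real n / real i) = \<bar>x\<bar> powr real n"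
    using assms by (simp add: powr_powr)
  also have "\<dots> = \<bar>x\<bar> ^ n"
    using False by (simp add: powr_realpow)
  finally show ?thesis .
qed (use assms in \<open>simp add: power_0_left\<close>)

text \<open>Weighted product bound: if each factor, raised to the power s / i_j, is at most b, then
  the product of the powers n_j is at most b, because the weights i_j n_j / s add up to
  one.\<close>

lemma prod_power_le_of_powr_le:
  fixes y :: "nat \<Rightarrow> real" and i n :: "nat \<Rightarrow> nat" and b :: real and k :: nat
  defines "s \<equiv> (\<Sum>j<k. i j * n j)"
  assumes "k \<ge> 1"
    and pos: "\<And>j. j < k \<Longrightarrow> i j > 0 \<and> n j > 0"
    and y_nonneg: "\<And>j. j < k \<Longrightarrow> y j \<ge> 0"
    and y_le: "\<And>j. j < k \<Longrightarrow> y j powr (real s / real (i j)) \<le> b"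
  shows "(\<Prod>j<k. y j ^ n j) \<le> b"
proof -
  have k0: "0 < k" using \<open>k \<ge> 1\<close> by simp
  have s_pos: "s > 0"
    unfolding s_def using k0 pos by (intro sum_pos2[of _ 0]) simp_all
  show ?thesis
  proof (cases "b = 0")
    case True
    then have "y 0 = 0" using y_le[OF k0] y_nonneg[OF k0] pos[OF k0] s_pos by simp
    then have "(\<Prod>j<k. y j ^ n j) = 0"
      using k0 pos[OF k0] by (intro prod_zero bexI[of _ 0]) simp_all
    then show ?thesis using True by linarith
  next
    case False
    have b_pos: "b > 0"
      using y_le[OF k0] False by (metis powr_ge_zero order.not_eq_order_implies_strict order_trans)
    have factor_le: "y j ^ n j \<le> b powr (real (i j * n j) / real s)" if j: "j < k" for j
    proof -
      have "y j ^ n j = (y j powr (real s / real (i j))) powr (real (i j * n j) / real s)"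
        using pos[OF j] s_pos y_nonneg[OF j] by (simp add: powr_powr powr_realpow')
      also have "\<dots> \<le> b powr (real (i j * n j) / real s)"
        using y_le[OF j] by (intro powr_mono2) simp_all
      finally show ?thesis .
    qed
    have "(\<Prod>j<k. y j ^ n j) \<le> (\<Prod>j<k. b powr (real (i j * n j) / real s))"
      using factor_le y_nonneg by (intro prod_mono) simp
    also have "\<dots> = b powr (\<Sum>j<k. real (i j * n j) / real s)"
      using False by (rule powr_sum[symmetric])
    also have "(\<Sum>j<k. real (i j * n j) / real s) = real s / real s"
      unfolding s_def by (simp only: of_nat_sum sum_divide_distrib)
    also have "\<dots> = 1"
      using s_pos by simp
    finally show ?thesis using b_pos by simp
  qed
qed

lemma gen_sigma_subalgebra:
  assumes "finite_measure M" and [measurable]: "Y \<in> borel_measurable M"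
  shows "finite_measure_subalgebra M (gen_sigma M Y)"
    and "Y \<in> borel_measurable (gen_sigma M Y)"
proof -
  show "Y \<in> borel_measurable (gen_sigma M Y)"
    unfolding gen_sigma_def by (rule measurable_vimage_algebra1) simp
  have "subalgebra M (gen_sigma M Y)"
    unfolding subalgebra_def gen_sigma_def
    by (auto simp: sets_vimage_algebra2 measurable_sets)
  then show "finite_measure_subalgebra M (gen_sigma M Y)"
    using assms(1) by (simp add: finite_measure_subalgebra_def finite_measure_subalgebra_axioms_def)
qed

context finite_measure_subalgebra
begin

text \<open>An F-measurable summand can be pulled out of a conditional expectation even if it is not
  integrable: localise to the F-measurable sets where it is bounded.\<close>

lemma real_cond_exp_add_F_meas:
  assumes G [measurable]: "G \<in> borel_measurable F" and h: "integrable M h"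
  shows "AE x in M. real_cond_exp M F (\<lambda>x. G x + h x) x = G x + real_cond_exp M F h x"
proof -
  have [measurable]: "G \<in> borel_measurable M" "h \<in> borel_measurable M"
    using measurable_from_subalg[OF subalg G] h by auto
  define A where "A m = {x \<in> space M. \<bar>G x\<bar> \<le> real m}" for m :: nat
  have A_F [measurable]: "A m \<in> sets F" for m
  proof -
    have "{x \<in> space F. \<bar>G x\<bar> \<le> real m} \<in> sets F" by measurable
    then show ?thesis using subalg unfolding A_def subalgebra_def by simp
  qed
  have [measurable]: "A m \<in> sets M" for m
    using A_F subalg unfolding subalgebra_def by auto
  have on_A: "AE x in M. indicator (A m) x * real_cond_exp M F (\<lambda>x. G x + h x) x
                         = indicator (A m) x * (G x + real_cond_exp M F h x)" for m
  proof -
    let ?i = "\<lambda>x. indicator (A m) x :: real"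
    have int_G: "integrable M (\<lambda>x. ?i x * G x)"
      by (rule Bochner_Integration.integrable_bound[of _ "\<lambda>_. real m"]) (auto simp: A_def indicator_def)
    have int_h: "integrable M (\<lambda>x. ?i x * h x)"
      using integrable_mult_indicator[OF _ h] by simp
    have "AE x in M. real_cond_exp M F (\<lambda>x. ?i x * (G x + h x)) x
                     = ?i x * real_cond_exp M F (\<lambda>x. G x + h x) x"
      using int_G int_h by (intro real_cond_exp_mult) (simp_all add: distrib_left)
    moreover have "AE x in M. real_cond_exp M F (\<lambda>x. ?i x * G x + ?i x * h x) x
                     = real_cond_exp M F (\<lambda>x. ?i x * G x) x + real_cond_exp M F (\<lambda>x. ?i x * h x) x"
      using int_G int_h by (rule real_cond_exp_add)
    moreover have "AE x in M. real_cond_exp M F (\<lambda>x. ?i x * G x) x = ?i x * G x"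
      using int_G by (rule real_cond_exp_F_meas) simp
    moreover have "AE x in M. real_cond_exp M F (\<lambda>x. ?i x * h x) x = ?i x * real_cond_exp M F h x"
      using int_h by (intro real_cond_exp_mult) simp_all
    ultimately show ?thesis
      by eventually_elim (simp add: distrib_left)
  qed
  have "AE x in M. \<forall>m. indicator (A m) x * real_cond_exp M F (\<lambda>x. G x + h x) x
                         = indicator (A m) x * (G x + real_cond_exp M F h x)"
    using on_A by (subst AE_all_countable) blast
  then show ?thesis
  proof (rule AE_mp[OF _ AE_I2], intro impI)
    fix x assume "x \<in> space M"
      and "\<forall>m. indicator (A m) x * real_cond_exp M F (\<lambda>x. G x + h x) x
                 = indicator (A m) x * (G x + real_cond_exp M F h x)"
    moreover obtain m :: nat where "\<bar>G x\<bar> \<le> real m" using real_arch_simple by blast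
    ultimately show "real_cond_exp M F (\<lambda>x. G x + h x) x = G x + real_cond_exp M F h x"
      unfolding A_def by (metis (mono_tags, lifting) indicator_simps(1) mem_Collect_eq mult_1)
  qed
qed

lemma cond_central_moment_shift:
  assumes G [measurable]: "G \<in> borel_measurable F" and W: "integrable M W"
    and X: "\<And>x. X x = G x + W x"
  shows "AE x in M. real_cond_exp M F (\<lambda>x. (X x - real_cond_exp M F X x) ^ p) x
                  = real_cond_exp M F (\<lambda>x. (W x - real_cond_exp M F W x) ^ p) x"
proof (rule real_cond_exp_cong)
  have X_eq: "X = (\<lambda>x. G x + W x)" using X by blast
  have [measurable]: "G \<in> borel_measurable M" "W \<in> borel_measurable M"
    using measurable_from_subalg[OF subalg G] W by auto
  show "AE x in M. (X x - real_cond_exp M F X x) ^ p = (W x - real_cond_exp M F W x) ^ p"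
    using real_cond_exp_add_F_meas[OF G W] by eventually_elim (simp add: X_eq)
  show "(\<lambda>x. (X x - real_cond_exp M F X x) ^ p) \<in> borel_measurable M"
    "(\<lambda>x. (W x - real_cond_exp M F W x) ^ p) \<in> borel_measurable M"
    unfolding X_eq by measurable
qed

lemma real_cond_exp_abs_powr_le:
  fixes q :: real
  assumes "q \<ge> 1" and f: "integrable M f" and f_q: "integrable M (\<lambda>x. \<bar>f x\<bar> powr q)"
  shows "AE x in M. \<bar>real_cond_exp M F f x\<bar> powr q \<le> real_cond_exp M F (\<lambda>x. \<bar>f x\<bar> powr q) x"
    and "integrable M (\<lambda>x. \<bar>real_cond_exp M F f x\<bar> powr q)"
  using real_cond_exp_jensens_inequality(2)[OF f, of UNIV, OF _ _ f_q abs_powr_convex[OF assms(1)]]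
    integrable_convex_cond_exp[OF f, of UNIV, OF _ _ f_q abs_powr_convex[OF assms(1)]]
  by auto

lemma innovation_abs_moment_le:
  assumes N: "integrable M N" and N_p: "integrable M (\<lambda>x. \<bar>N x\<bar> ^ p)" and "p > 0"
  shows "integrable M (\<lambda>x. \<bar>N x - real_cond_exp M F N x\<bar> ^ p)"
    and "(\<integral>x. \<bar>N x - real_cond_exp M F N x\<bar> ^ p \<partial>M) \<le> 2 ^ p * (\<integral>x. \<bar>N x\<bar> ^ p \<partial>M)"
proof -
  let ?R = "real_cond_exp M F N"
  have powr_p: "\<bar>t\<bar> powr real p = \<bar>t\<bar> ^ p" for t :: real
    using \<open>p > 0\<close> by (simp add: powr_realpow')
  have R_le: "AE x in M. \<bar>?R x\<bar> ^ p \<le> real_cond_exp M F (\<lambda>x. \<bar>N x\<bar> ^ p) x"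
    and R_p: "integrable M (\<lambda>x. \<bar>?R x\<bar> ^ p)"
    using real_cond_exp_abs_powr_le[of p N] N N_p \<open>p > 0\<close> by (simp_all add: powr_p)
  have "(\<integral>x. \<bar>?R x\<bar> ^ p \<partial>M) \<le> (\<integral>x. real_cond_exp M F (\<lambda>x. \<bar>N x\<bar> ^ p) x \<partial>M)"
    using R_p real_cond_exp_int(1)[OF N_p] R_le by (rule integral_mono_AE)
  also have "\<dots> = (\<integral>x. \<bar>N x\<bar> ^ p \<partial>M)"
    using N_p by (rule real_cond_exp_int(2))
  finally have R_int_le: "(\<integral>x. \<bar>?R x\<bar> ^ p \<partial>M) \<le> (\<integral>x. \<bar>N x\<bar> ^ p \<partial>M)" .
  have pointwise: "\<bar>N x - ?R x\<bar> ^ p \<le> 2 ^ (p - 1) * (\<bar>N x\<bar> ^ p + \<bar>?R x\<bar> ^ p)" for x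
    using abs_diff_power_le \<open>p > 0\<close> by blast
  have dominating: "integrable M (\<lambda>x. 2 ^ (p - 1) * (\<bar>N x\<bar> ^ p + \<bar>?R x\<bar> ^ p))"
    using N_p R_p by (intro integrable_mult_right Bochner_Integration.integrable_add)
  show V_p: "integrable M (\<lambda>x. \<bar>N x - ?R x\<bar> ^ p)"
  proof (rule Bochner_Integration.integrable_bound[OF dominating])
    show "AE x in M. norm (\<bar>N x - ?R x\<bar> ^ p) \<le> norm (2 ^ (p - 1) * (\<bar>N x\<bar> ^ p + \<bar>?R x\<bar> ^ p))"
    proof (rule AE_I2)
      fix x
      have "norm (\<bar>N x - ?R x\<bar> ^ p) = \<bar>N x - ?R x\<bar> ^ p"
        by simp
      then show "norm (\<bar>N x - ?R x\<bar> ^ p) \<le> norm (2 ^ (p - 1) * (\<bar>N x\<bar> ^ p + \<bar>?R x\<bar> ^ p))"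
        using pointwise[of x] by (simp only: real_norm_def) (meson abs_ge_self order_trans)
    qed
    show "(\<lambda>x. \<bar>N x - ?R x\<bar> ^ p) \<in> borel_measurable M"
      using N by measurable
  qed
  have "(\<integral>x. \<bar>N x - ?R x\<bar> ^ p \<partial>M) \<le> (\<integral>x. 2 ^ (p - 1) * (\<bar>N x\<bar> ^ p + \<bar>?R x\<bar> ^ p) \<partial>M)"
    using V_p dominating pointwise by (rule integral_mono)
  also have "\<dots> = 2 ^ (p - 1) * ((\<integral>x. \<bar>N x\<bar> ^ p \<partial>M) + (\<integral>x. \<bar>?R x\<bar> ^ p \<partial>M))"
    using N_p R_p by simp
  also have "\<dots> \<le> 2 ^ (p - 1) * (2 * (\<integral>x. \<bar>N x\<bar> ^ p \<partial>M))"
    using R_int_le by simp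
  also have "\<dots> = 2 ^ p * (\<integral>x. \<bar>N x\<bar> ^ p \<partial>M)"
    using \<open>p > 0\<close> by (cases p) simp_all
  finally show "(\<integral>x. \<bar>N x - ?R x\<bar> ^ p \<partial>M) \<le> 2 ^ p * (\<integral>x. \<bar>N x\<bar> ^ p \<partial>M)" .
qed

text \<open>Mixed conditional moments of a random variable are bounded by its unconditional absolute
  moment of total order s: conditional Jensen controls each factor by the conditional
  moment of order s, and the weighted product bound combines them.\<close>

lemma mixed_cond_moment_le:
  fixes V :: "'a \<Rightarrow> real" and i n :: "nat \<Rightarrow> nat" and k :: nat
  defines "s \<equiv> (\<Sum>j<k. i j * n j)"
  assumes "k \<ge> 1" and pos: "\<And>j. j < k \<Longrightarrow> i j > 0 \<and> n j > 0"
    and V [measurable]: "V \<in> borel_measurable M"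
    and V_p: "\<And>p. p > 0 \<Longrightarrow> integrable M (\<lambda>x. \<bar>V x\<bar> ^ p)"
  shows "(\<integral>\<^sup>+x. ennreal (\<Prod>j<k. \<bar>real_cond_exp M F (\<lambda>x. V x ^ i j) x\<bar> ^ n j) \<partial>M)
           \<le> ennreal (\<integral>x. \<bar>V x\<bar> ^ s \<partial>M)"
proof -
  let ?E = "real_cond_exp M F"
  have s_pos: "s > 0"
    unfolding s_def using \<open>k \<ge> 1\<close> pos by (intro sum_pos2[of _ 0]) simp_all
  have moment_le: "AE x in M. \<bar>?E (\<lambda>x. V x ^ i j) x\<bar> powr (real s / real (i j)) \<le> ?E (\<lambda>x. \<bar>V x\<bar> ^ s) x"
    if j: "j < k" for j
  proof -
    have "i j \<le> s"
      unfolding s_def using j pos[OF j] by (intro order_trans[OF _ member_le_sum[of j]]) simp_all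
    then have "real s / real (i j) \<ge> 1" using pos[OF j] by simp
    moreover have "(\<lambda>x. \<bar>V x ^ i j\<bar> powr (real s / real (i j))) = (\<lambda>x. \<bar>V x\<bar> ^ s)"
      using pos[OF j] s_pos by (intro ext abs_power_powr) simp_all
    moreover have "integrable M (\<lambda>x. V x ^ i j)"
    proof -
      have "integrable M (\<lambda>x. \<bar>V x ^ i j\<bar>)"
        using V_p[of "i j"] pos[OF j] by (simp only: power_abs)
      then show ?thesis by (simp only: integrable_abs_iff[of "\<lambda>x. V x ^ i j"] V borel_measurable_power)
    qed
    ultimately show ?thesis
      using real_cond_exp_abs_powr_le(1)[of "real s / real (i j)" "\<lambda>x. V x ^ i j"] V_p[OF s_pos] by simp
  qed
  have "AE x in M. \<forall>j\<in>{..<k}. \<bar>?E (\<lambda>x. V x ^ i j) x\<bar> powr (real s / real (i j)) \<le> ?E (\<lambda>x. \<bar>V x\<bar> ^ s) x"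
    using moment_le by (intro AE_finite_allI) simp_all
  then have "AE x in M. (\<Prod>j<k. \<bar>?E (\<lambda>x. V x ^ i j) x\<bar> ^ n j) \<le> ?E (\<lambda>x. \<bar>V x\<bar> ^ s) x"
  proof eventually_elim
    case (elim x)
    show ?case
      by (rule prod_power_le_of_powr_le[of k i n, folded s_def]) (use \<open>k \<ge> 1\<close> pos elim in auto)
  qed
  then have "(\<integral>\<^sup>+x. ennreal (\<Prod>j<k. \<bar>?E (\<lambda>x. V x ^ i j) x\<bar> ^ n j) \<partial>M)
               \<le> (\<integral>\<^sup>+x. ennreal (?E (\<lambda>x. \<bar>V x\<bar> ^ s) x) \<partial>M)"
    by (intro nn_integral_mono_AE) (auto elim!: eventually_mono intro: ennreal_leI)
  also have "\<dots> = ennreal (\<integral>x. ?E (\<lambda>x. \<bar>V x\<bar> ^ s) x \<partial>M)"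
    using real_cond_exp_int(1)[OF V_p[OF s_pos]] by (intro nn_integral_eq_integral real_cond_exp_pos) simp_all
  also have "\<dots> = ennreal (\<integral>x. \<bar>V x\<bar> ^ s \<partial>M)"
    using real_cond_exp_int(2)[OF V_p[OF s_pos]] by simp
  finally show ?thesis .
qed

lemma mixed_cond_central_moment_le:
  fixes W :: "'a \<Rightarrow> real" and i n :: "nat \<Rightarrow> nat" and k :: nat
  defines "s \<equiv> (\<Sum>j<k. i j * n j)"
  assumes "k \<ge> 1" and pos: "\<And>j. j < k \<Longrightarrow> i j > 0 \<and> n j > 0"
    and W: "integrable M W" and W_p: "\<And>p. integrable M (\<lambda>x. \<bar>W x\<bar> ^ p)"
  shows "(\<integral>\<^sup>+x. ennreal (\<Prod>j<k. \<bar>real_cond_exp M F (\<lambda>x. (W x - real_cond_exp M F W x) ^ i j) x\<bar> ^ n j) \<partial>M)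
           \<le> ennreal (2 ^ s * (\<integral>x. \<bar>W x\<bar> ^ s \<partial>M))"
proof -
  have s_pos: "s > 0"
    unfolding s_def using \<open>k \<ge> 1\<close> pos by (intro sum_pos2[of _ 0]) simp_all
  have "(\<integral>\<^sup>+x. ennreal (\<Prod>j<k. \<bar>real_cond_exp M F (\<lambda>x. (W x - real_cond_exp M F W x) ^ i j) x\<bar> ^ n j) \<partial>M)
          \<le> ennreal (\<integral>x. \<bar>W x - real_cond_exp M F W x\<bar> ^ s \<partial>M)"
    unfolding s_def
  proof (rule mixed_cond_moment_le)
    show "(\<lambda>x. W x - real_cond_exp M F W x) \<in> borel_measurable M"
      using borel_measurable_integrable[OF W] by measurable
  qed (use \<open>k \<ge> 1\<close> pos innovation_abs_moment_le(1)[OF W W_p] in auto)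
  also have "\<dots> \<le> ennreal (2 ^ s * (\<integral>x. \<bar>W x\<bar> ^ s \<partial>M))"
    using innovation_abs_moment_le(2)[OF W W_p s_pos] by (rule ennreal_leI)
  finally show ?thesis .
qed

end

text \<open>The main theorem.\<close>

theorem mainTheorem19:
  fixes M :: "'a measure" and X N Y :: "'a \<Rightarrow> real" and snr :: real
    and k :: nat and i n :: "nat \<Rightarrow> nat"
  assumes "prob_space M"
    and "X \<in> borel_measurable M"
    and "distributed M lborel N std_normal_density"
    and "prob_space.indep_var M borel X borel N"
    and "snr > 0"
    and "\<And>\<omega>. Y \<omega> = sqrt snr * X \<omega> + N \<omega>"
    and "k \<ge> 1"
    and "\<And>j. j < k \<Longrightarrow> i j > 0"
    and "\<And>j. j < k \<Longrightarrow> n j > 0"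
  shows "(\<integral>\<^sup>+ \<omega>. ennreal (\<Prod>j<k. \<bar>cond_moment M X Y (i j) \<omega>\<bar> ^ n j) \<partial>M)
           \<le> ennreal (snr powr (- real (\<Sum>j<k. i j * n j) / 2) * 2 ^ (\<Sum>j<k. i j * n j)
                      * sqrt (fact (\<Sum>j<k. i j * n j)))"
proof -
  interpret prob_space M by fact
  define s where "s = (\<Sum>j<k. i j * n j)"
  define c where "c = snr powr (-1/2)"
  define W where "W = (\<lambda>\<omega>. (- c) * N \<omega>)"
  have [measurable]: "N \<in> borel_measurable M" "X \<in> borel_measurable M"
    using distributed_measurable[OF assms(3)] assms(2) by simp_all
  have "Y = (\<lambda>\<omega>. sqrt snr * X \<omega> + N \<omega>)"
    by (simp add: fun_eq_iff assms(6))
  then have Y_meas [measurable]: "Y \<in> borel_measurable M"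
    by (simp only:) measurable
  interpret S: finite_measure_subalgebra M "gen_sigma M Y"
    by (rule gen_sigma_subalgebra(1)[OF _ Y_meas]) unfold_locales
  let ?E = "real_cond_exp M (gen_sigma M Y)"
  have W_p: "integrable M (\<lambda>\<omega>. \<bar>W \<omega>\<bar> ^ p)" for p
    unfolding W_def by (rule scaled_std_normal_abs_moment(1)[OF assms(3)])
  have W: "integrable M W"
    using W_p[of 1] by (simp add: W_def integrable_abs_iff)
  have "X \<omega> = c * Y \<omega> + W \<omega>" for \<omega>
    using assms(5) by (simp add: assms(6) W_def c_def algebra_simps powr_half_sqrt[symmetric] flip: powr_add)
  then have "AE \<omega> in M. \<forall>p. cond_moment M X Y p \<omega> = ?E (\<lambda>\<omega>. (W \<omega> - ?E W \<omega>) ^ p) \<omega>"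
    unfolding AE_all_countable cond_moment_def
    using gen_sigma_subalgebra(2)[OF _ Y_meas] W by (intro allI S.cond_central_moment_shift) simp_all
  then have "(\<integral>\<^sup>+ \<omega>. ennreal (\<Prod>j<k. \<bar>cond_moment M X Y (i j) \<omega>\<bar> ^ n j) \<partial>M)
      = (\<integral>\<^sup>+ \<omega>. ennreal (\<Prod>j<k. \<bar>?E (\<lambda>\<omega>. (W \<omega> - ?E W \<omega>) ^ i j) \<omega>\<bar> ^ n j) \<partial>M)"
    by (intro nn_integral_cong_AE) (auto elim!: eventually_mono)
  also have "\<dots> \<le> ennreal (2 ^ s * (\<integral>\<omega>. \<bar>W \<omega>\<bar> ^ s \<partial>M))"
    unfolding s_def using assms(7-9) W W_p by (intro S.mixed_cond_central_moment_le) simp_all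
  also have "\<dots> \<le> ennreal (2 ^ s * (snr powr (- real s / 2) * sqrt (fact s)))"
    using scaled_std_normal_abs_moment(2)[OF assms(3), of "- c" s] assms(5)
    by (intro ennreal_leI mult_left_mono) (simp_all add: W_def c_def powr_power)
  finally show ?thesis
    unfolding s_def by (simp add: mult_ac)
qed

end
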